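(* Let $m\ge2$ be an integer. Let $N>0$, $\tau=x+iy$ with $y=\frac{1}{2\sqrt{6N}}$ and $y\le|x|\le\frac12$. Then \[ \left|\frac{1}{(q;q)_\infty}\big(h(q)-m\,h(q^m)\big)\right|\ll N^{3/4}e^{\frac\pi2\sqrt{N/6}}. \]
   Context: $q=e^{2\pi i\tau}$, $(q;q)_\infty=\prod_{j\ge1}(1-q^j)$, $h(q)=\sum_{n=1}^\infty\frac{(-1)^{n+1}q^{n(n+1)/2}}{1-q^n}$. The implied constant is independent of $N$ and $x$. *)

theory Defs
  imports "HOL-Analysis.Analysis"
begin

definition qpoch_inf :: "complex \<Rightarrow> complex" where
  "qpoch_inf q = (\<Prod>j. (1 - q ^ (j + 1)))"

text \<open>h(q) = sum_{n>=1} (-1)^(n+1) q^(n(n+1)/2) / (1 - q^n).\<close>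
definition h_fun :: "complex \<Rightarrow> complex" where
  "h_fun q = (\<Sum>n. (-1) ^ (n + 2) * q ^ ((n + 1) * (n + 2) div 2) / (1 - q ^ (n + 1)))"

end

theory Submission
  imports Defs "HOL-Complex_Analysis.Weierstrass_Factorization"
begin

text \<open>
  For \<open>q = exp (2\<pi>i\<tau>)\<close>, \<open>\<tau> = x + iy\<close>, expanding \<open>log (1 - q\<^sup>n)\<close> gives
  \<open>log \<bar>1 / (q;q)\<^sub>\<infinity>\<bar> = \<Sum>\<^sub>j Re (q\<^sup>j / (1 - q\<^sup>j)) / j\<close>. Each term is at most \<open>1 / (2\<pi>yj\<^sup>2)\<close>,
  which only yields \<open>\<pi> / (12y)\<close>; the hypothesis \<open>\<bar>x\<bar> \<ge> y\<close> gains the missing factor 2. While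
  \<open>2\<pi>j\<bar>\<tau>\<bar>\<close> is small, the Laurent expansion of \<open>e\<^sup>z / (1 - e\<^sup>z)\<close> at \<open>z = 2\<pi>ij\<tau>\<close> shows that the
  \<open>j\<close>-th term is about \<open>y / (2\<pi>\<bar>\<tau>\<bar>\<^sup>2j\<^sup>2) \<le> 1 / (4\<pi>yj\<^sup>2)\<close>; the remaining terms are summed with the
  crude bound, and if \<open>\<bar>\<tau>\<bar>\<close> is not small only the first term needs improving, which is easy since
  \<open>q\<close> then stays away from 1. Hence \<open>\<bar>1 / (q;q)\<^sub>\<infinity>\<bar> \<le> C exp (\<pi> / (24y)) = C exp (\<pi>/2 sqrt (N/6))\<close>.
  The numerator is bounded trivially: splitting the series for \<open>h(w)\<close> at \<open>n \<approx> (1 - \<bar>w\<bar>)\<^sup>-\<^sup>1\<^sup>/\<^sup>2\<close>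
  gives \<open>\<bar>h(w)\<bar> \<le> 6 (1 - \<bar>w\<bar>)\<^sup>-\<^sup>3\<^sup>/\<^sup>2\<close>, and \<open>1 - \<bar>q\<bar>\<close> is of order \<open>y\<close>, i.e. of order \<open>N\<^sup>-\<^sup>1\<^sup>/\<^sup>2\<close>.
\<close>

lemma norm_power_lt_one: "norm (q :: complex) < 1 \<Longrightarrow> n \<noteq> 0 \<Longrightarrow> norm (q ^ n) < 1"
  by (simp add: norm_power power_less_one_iff)

lemma Re_div_one_minus_le:
  fixes w :: complex
  assumes "norm w < 1"
  shows "Re (w / (1 - w)) \<le> norm w / (1 - norm w)"
proof -
  have "Re (w / (1 - w)) \<le> norm w / norm (1 - w)" by (metis complex_Re_le_cmod norm_divide)
  also have "\<dots> \<le> norm w / (1 - norm w)"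
    using assms norm_triangle_ineq2[of 1 w] by (intro divide_left_mono mult_pos_pos) auto
  finally show ?thesis .
qed

lemma powr_three_halves:
  fixes x :: real
  assumes "0 \<le> x"
  shows "x powr (3/2) = x * sqrt x"
proof (cases "x = 0")
  case False
  have "x powr (3/2) = x powr (1 + 1/2)" by simp
  also have "\<dots> = x * sqrt x" using assms False by (simp only: powr_add powr_half_sqrt) simp
  finally show ?thesis .
qed simp

lemma inverse_one_minus_power_le:
  fixes \<rho> :: real
  assumes "0 \<le> \<rho>" "\<rho> < 1" "M \<ge> 1"
  shows "1 / (1 - \<rho> ^ M) \<le> 1 + 1 / (M * (1 - \<rho>))"
proof -
  define d where "d = real M * (1 - \<rho>)"
  have d0: "0 < d" using assms by (simp add: d_def)
  have "\<rho> ^ M \<le> exp (- (1 - \<rho>)) ^ M"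
    using assms exp_ge_add_one_self[of "\<rho> - 1"] by (intro power_mono) auto
  also have "\<dots> = exp (- d)" by (simp add: d_def exp_of_nat_mult[symmetric] algebra_simps)
  also have "\<dots> = 1 / exp d" by (simp add: exp_minus divide_inverse)
  also have "\<dots> \<le> 1 / (1 + d)" using d0 exp_ge_add_one_self[of d] by (intro divide_left_mono) auto
  finally have "d / (1 + d) \<le> 1 - \<rho> ^ M" using d0 by (simp add: field_simps)
  moreover have "0 < d / (1 + d)" using d0 by simp
  ultimately have "1 / (1 - \<rho> ^ M) \<le> 1 / (d / (1 + d))"
    by (intro divide_left_mono mult_pos_pos) auto
  also have "1 / (d / (1 + d)) = 1 + 1 / d" using d0 by (simp add: field_simps)
  finally show ?thesis by (simp add: d_def)
qed

lemma pi_squared_le_10: "pi ^ 2 \<le> 10"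
proof -
  have "pi * pi \<le> 3.15 * 3.15" using pi_approx(2) by (intro mult_mono) auto
  then show ?thesis by (simp add: power2_eq_square)
qed

lemma inverse_squares_sums_nat: "(\<lambda>j. 1 / real j ^ 2) sums (pi ^ 2 / 6)"
  using sums_iff_shift[of "\<lambda>j. 1 / real j ^ 2" 1] inverse_squares_sums by simp

lemma inverse_squares_tail_le:
  assumes K: "K \<ge> 1"
  shows "summable (\<lambda>j. if K < j then 1 / real j ^ 2 else 0)"
    and "(\<Sum>j. if K < j then 1 / real j ^ 2 else 0) \<le> 1 / real K"
proof -
  define tel where "tel j = (if K < j then 1 / real (j - 1) - 1 / real j else 0)" for j
  have "(\<lambda>i. 1 / real (i + K)) \<longlonglongrightarrow> 0"
    using LIMSEQ_ignore_initial_segment[OF lim_inverse_n', of K] by simp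
  from telescope_sums'[OF this] have "(\<lambda>i. tel (i + Suc K)) sums (1 / real K)" by (simp add: tel_def)
  moreover have "(\<Sum>i<Suc K. tel i) = 0" by (simp add: tel_def)
  ultimately have tel_sums: "tel sums (1 / real K)"
    using sums_iff_shift[of tel "Suc K"] by simp
  have le: "(if K < j then 1 / real j ^ 2 else 0) \<le> tel j" for j
  proof (cases "K < j")
    case True
    then have "1 / real (j - 1) - 1 / real j = 1 / (real j * (real j - 1))"
      using K by (simp add: of_nat_diff field_simps)
    also have "\<dots> \<ge> 1 / real j ^ 2"
      using True K by (simp add: power2_eq_square divide_left_mono mult_pos_pos)
    finally show ?thesis using True by (simp add: tel_def)
  qed (simp add: tel_def)
  show summ: "summable (\<lambda>j. if K < j then 1 / real j ^ 2 else 0)"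
    by (rule summable_comparison_test[OF _ sums_summable[OF tel_sums]]) (use le in auto)
  show "(\<Sum>j. if K < j then 1 / real j ^ 2 else 0) \<le> 1 / real K"
    using suminf_le[OF le summ sums_summable[OF tel_sums]] tel_sums by (simp add: sums_iff)
qed

lemma norm_exp_div_one_minus_exp_plus_inverse_le:
  fixes z :: complex
  assumes z0: "z \<noteq> 0" and zs: "norm z \<le> 1/2"
  shows "norm (exp z / (1 - exp z) + 1 / z + 1/2) \<le> 3 * norm z"
proof -
  define u where "u = - z"
  have us: "norm u \<le> 1/2" and u0: "u \<noteq> 0" using zs z0 by (auto simp: u_def)
  define D where "D = exp u - 1"
  have D_ge: "norm D \<ge> norm u / 2" using norm_exp_bounds[OF us] by (simp add: D_def)
  then have D0: "D \<noteq> 0" using u0 by auto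
  define R where "R = D - u - u^2/2"
  have "exp (norm u) \<le> exp (1/2 :: real)" using us by simp
  also have "\<dots> \<le> 2" using exp_bound_half[of "1/2 :: real"] by simp
  finally have "exp (norm u) \<le> 2" .
  have "norm R \<le> exp (norm u) * norm u ^ 3 / 2"
    using Taylor_exp_field[of u 2] by (simp add: R_def D_def eval_nat_numeral algebra_simps)
  moreover have "exp (norm u) * norm u ^ 3 / 2 \<le> 2 * norm u ^ 3 / 2"
    using \<open>exp (norm u) \<le> 2\<close> by (intro divide_right_mono mult_right_mono) auto
  ultimately have R_le: "norm R \<le> norm u ^ 3" by simp
  \<comment> \<open>with \<open>D = e\<^sup>u - 1 = u + u\<^sup>2/2 + R\<close>, the singular parts \<open>-1/u\<close> and \<open>1/2\<close> cancel exactly\<close>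
  have "exp z / (1 - exp z) + 1 / z + 1/2 = 1 / D - 1 / u + 1/2"
    using D0 by (simp add: u_def D_def exp_minus field_simps)
  also have "\<dots> = (u^3/2 - (2 - u) * R) / (2 * u * D)"
    using D0 u0 unfolding R_def by (simp add: field_simps power2_eq_square power3_eq_cube)
  finally have eq: "exp z / (1 - exp z) + 1 / z + 1/2 = (u^3/2 - (2 - u) * R) / (2 * u * D)" .
  have "norm (u^3/2 - (2 - u) * R) \<le> norm (u^3/2) + norm (2 - u) * norm R"
    using norm_triangle_ineq4 by (metis norm_mult)
  also have "\<dots> \<le> norm u ^ 3 / 2 + (5/2) * norm u ^ 3"
  proof -
    have "norm (2 - u) \<le> 5/2" using norm_triangle_ineq4[of 2 u] us by simp
    then have "norm (2 - u) * norm R \<le> 5/2 * norm u ^ 3" using R_le by (intro mult_mono) auto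
    then show ?thesis by (simp add: norm_power)
  qed
  finally have num: "norm (u^3/2 - (2 - u) * R) \<le> 3 * norm u ^ 3" by simp
  have den: "norm u ^ 2 \<le> norm (2 * u * D)"
    using mult_left_mono[OF D_ge, of "2 * norm u"] by (simp add: norm_mult power2_eq_square)
  have "norm (exp z / (1 - exp z) + 1 / z + 1/2) \<le> 3 * norm u ^ 3 / norm u ^ 2"
    unfolding eq norm_divide using num den u0 by (intro frac_le) auto
  also have "\<dots> = 3 * norm z" using u0 by (simp add: u_def power2_eq_square power3_eq_cube)
  finally show ?thesis .
qed

section \<open>The modulus of the q-Pochhammer symbol\<close>

lemma sums_swap_geometric_dominated:
  fixes a :: "nat \<Rightarrow> nat \<Rightarrow> real"
  assumes r: "0 \<le> r" "r < 1" and dom: "\<And>n j. \<bar>a n j\<bar> \<le> r^n * r^j"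
    and rows: "\<And>n. (\<lambda>j. a n j) sums F n" and cols: "\<And>j. (\<lambda>n. a n j) sums G j"
  shows "\<exists>S. F sums S \<and> G sums S"
proof -
  have geo: "(\<lambda>j. r^j) sums (1 / (1 - r))" using geometric_sums[of r] r by simp
  have dom_sum: "(\<lambda>(n, j). r^n * r^j) summable_on UNIV \<times> UNIV"
  proof (rule summable_on_SigmaI[where g = "\<lambda>n. r^n / (1 - r)"])
    show "((\<lambda>j. case (n, j) of (n, j) \<Rightarrow> r^n * r^j) has_sum r^n / (1 - r)) UNIV" for n
      using sums_mult[OF geo, of "r^n"] r by (intro sums_nonneg_imp_has_sum) auto
    show "(\<lambda>n. r^n / (1 - r)) summable_on UNIV"
      using sums_divide[OF geo, of "1 - r"] r unfolding summable_on_def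
      by (intro exI sums_nonneg_imp_has_sum) auto
  qed (use r in auto)
  have abs: "(\<lambda>(n, j). a n j) summable_on UNIV \<times> UNIV"
  proof (rule abs_summable_summable, rule Infinite_Sum.abs_summable_on_comparison_test)
    show "(\<lambda>x. norm ((\<lambda>(n, j). r^n * r^j) x)) summable_on UNIV \<times> UNIV"
      using dom_sum r by (simp add: case_prod_unfold)
    show "norm ((\<lambda>(n, j). a n j) x) \<le> norm ((\<lambda>(n, j). r^n * r^j) x)" for x
      using dom[of "fst x" "snd x"] r by (simp add: case_prod_beta)
  qed
  have has_sum_row: "((\<lambda>j. a n j) has_sum F n) UNIV" for n
  proof -
    have "summable (\<lambda>j. norm (a n j))"
      by (rule summable_comparison_test[of _ "\<lambda>j. r^n * r^j"])
         (use dom sums_summable[OF sums_mult[OF geo, of "r^n"]] in auto)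
    then show ?thesis by (intro norm_summable_imp_has_sum rows)
  qed
  have has_sum_col: "((\<lambda>n. a n j) has_sum G j) UNIV" for j
  proof -
    have "summable (\<lambda>n. norm (a n j))"
      by (rule summable_comparison_test[of _ "\<lambda>n. r^n * r^j"])
         (use dom sums_summable[OF sums_mult2[OF geo, of "r^j"]] in auto)
    then show ?thesis by (intro norm_summable_imp_has_sum cols)
  qed
  have abs': "(\<lambda>(j, n). a n j) summable_on UNIV \<times> UNIV"
    using abs summable_on_swap[of "\<lambda>(n, j). a n j" UNIV UNIV] by simp
  have row_sum: "infsum (\<lambda>j. a n j) UNIV = F n" for n
    using has_sum_row by (rule infsumI)
  have col_sum: "infsum (\<lambda>n. a n j) UNIV = G j" for j
    using has_sum_col by (rule infsumI)
  have "F summable_on UNIV"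
    using summable_on_Sigma_banach[of "\<lambda>n j. a n j" UNIV "\<lambda>_. UNIV"] abs by (simp add: row_sum)
  moreover have "G summable_on UNIV"
    using summable_on_Sigma_banach[of "\<lambda>j n. a n j" UNIV "\<lambda>_. UNIV"] abs' by (simp add: col_sum)
  moreover have "infsum F UNIV = infsum G UNIV"
    using infsum_swap_banach[OF abs] by (simp add: row_sum col_sum)
  ultimately show ?thesis
    by (metis has_sum_imp_sums has_sum_infsum)
qed

lemma ln_norm_one_minus_sums:
  fixes w :: complex
  assumes "norm w < 1"
  shows "(\<lambda>k. - (Re (w ^ k) / real k)) sums ln (norm (1 - w))"
proof -
  have "1 - w \<noteq> 0" using assms by auto
  then show ?thesis
    using sums_Re[OF Ln_series'[of "- w"]] assms by (simp add: Re_divide_of_nat)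
qed

definition lambert_term :: "complex \<Rightarrow> nat \<Rightarrow> real" where
  "lambert_term q j = Re (q ^ j / (1 - q ^ j)) / real j"

lemma lambert_term_zero [simp]: "lambert_term q 0 = 0"
  by (simp add: lambert_term_def)

lemma lambert_term_sums:
  fixes q :: complex
  assumes q: "norm q < 1"
  shows "(\<lambda>n. Re (q ^ ((n + 1) * j)) / real j) sums lambert_term q j"
proof (cases "j = 0")
  case False
  have "(\<lambda>n. q ^ j * (q ^ j) ^ n) sums (q ^ j * (1 / (1 - q ^ j)))"
    using geometric_sums[OF norm_power_lt_one[OF q False]] by (rule sums_mult)
  then have "(\<lambda>n. (q ^ j) ^ (n + 1)) sums (q ^ j / (1 - q ^ j))"
    by (simp add: mult_ac)
  from sums_divide[OF sums_Re[OF this], of "real j"] show ?thesis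
    unfolding lambert_term_def mult.commute[of "_ + 1" j] power_mult .
qed (simp add: lambert_term_def)

lemma abs_Re_power_div_le:
  fixes q :: complex
  assumes q: "norm q < 1"
  shows "\<bar>Re (q ^ ((n + 1) * j)) / real j\<bar> \<le> norm q ^ n * norm q ^ j"
proof (cases "j = 0")
  case False
  have "\<bar>Re (q ^ ((n + 1) * j)) / real j\<bar> \<le> \<bar>Re (q ^ ((n + 1) * j))\<bar> / 1"
    unfolding abs_divide using False by (intro divide_left_mono) auto
  also have "\<dots> \<le> norm (q ^ ((n + 1) * j))" using abs_Re_le_cmod by simp
  also have "\<dots> = norm q ^ ((n + 1) * j)" by (rule norm_power)
  also have "\<dots> \<le> norm q ^ (n + j)"
    using False q by (intro power_decreasing) (auto simp: algebra_simps)
  finally show ?thesis by (simp add: power_add)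
qed simp

lemma sums_ln_norm_qpoch_inf:
  fixes q :: complex
  assumes q: "norm q < 1"
  shows "(\<lambda>n. ln (norm (1 - q ^ (n + 1)))) sums ln (norm (qpoch_inf q))"
    and "norm (qpoch_inf q) > 0"
proof -
  have nz: "1 - q ^ (n + 1) \<noteq> 0" for n
    using norm_power_lt_one[OF q, of "n + 1"] by auto
  have "summable (\<lambda>n. norm q * norm q ^ n)"
    using q by (intro summable_mult summable_geometric) auto
  then have "summable (\<lambda>n. norm (- (q ^ (n + 1))))"
    by (simp add: norm_power norm_mult)
  then have "convergent_prod (\<lambda>n. 1 + - (q ^ (n + 1)))"
    by (rule summable_imp_convergent_prod_complex) (use nz in \<open>auto simp: eq_neg_iff_add_eq_0\<close>)
  then have "(\<lambda>n. 1 - q ^ (n + 1)) has_prod qpoch_inf q"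
    unfolding qpoch_inf_def by (simp add: convergent_prod_has_prod)
  then have prod: "(\<lambda>n. norm (1 - q ^ (n + 1))) has_prod norm (qpoch_inf q)"
    by (rule has_prod_norm)
  then show "(\<lambda>n. ln (norm (1 - q ^ (n + 1)))) sums ln (norm (qpoch_inf q))"
    using nz by (intro has_prod_imp_sums_ln_real') auto
  show "norm (qpoch_inf q) > 0"
    using has_prod_eq_0_iff[OF prod] nz by (auto simp: less_le)
qed

lemma norm_qpoch_inf_eq_exp:
  fixes q :: complex
  assumes q: "norm q < 1"
  shows "summable (lambert_term q)"
    and "norm (qpoch_inf q) = exp (- (\<Sum>j. lambert_term q j))"
proof -
  define a where "a n j = - (Re (q ^ ((n + 1) * j)) / real j)" for n j
  have dom: "\<bar>a n j\<bar> \<le> norm q ^ n * norm q ^ j" for n j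
    using abs_Re_power_div_le[OF q] by (simp add: a_def)
  have rows: "(\<lambda>j. a n j) sums ln (norm (1 - q ^ (n + 1)))" for n
    unfolding a_def power_mult by (rule ln_norm_one_minus_sums[OF norm_power_lt_one[OF q]]) simp
  have cols: "(\<lambda>n. a n j) sums (- lambert_term q j)" for j
    unfolding a_def by (intro sums_minus lambert_term_sums q)
  obtain S where S: "(\<lambda>n. ln (norm (1 - q ^ (n + 1)))) sums S" "(\<lambda>j. - lambert_term q j) sums S"
    using sums_swap_geometric_dominated[OF _ q dom rows cols] by auto
  then show "summable (lambert_term q)"
    using summable_minus_iff sums_summable by blast
  then have "S = - (\<Sum>j. lambert_term q j)"
    using S(2) by (metis sums_minus sums_unique2 summable_sums)
  then have "ln (norm (qpoch_inf q)) = - (\<Sum>j. lambert_term q j)"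
    using sums_unique2[OF S(1) sums_ln_norm_qpoch_inf(1)[OF q]] by simp
  then show "norm (qpoch_inf q) = exp (- (\<Sum>j. lambert_term q j))"
    using sums_ln_norm_qpoch_inf(2)[OF q] by (metis exp_ln)
qed

section \<open>A bound for h\<close>

lemma power_triangular_le:
  fixes \<rho> :: real
  assumes "0 \<le> \<rho>" "\<rho> \<le> 1"
  shows "\<rho> ^ ((n + 1) * (n + 2) div 2) \<le> (if n < 2 * M then 1 else 0) + (\<rho> ^ M) ^ n"
proof (cases "n < 2 * M")
  case False
  then have "2 * (M * n) \<le> (n + 1) * (n + 2)"
    using mult_mono[of n n "2 * M" "n + 2"] by (simp add: mult_ac)
  then have "M * n \<le> (n + 1) * (n + 2) div 2" by linarith
  then have "\<rho> ^ ((n + 1) * (n + 2) div 2) \<le> \<rho> ^ (M * n)"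
    using assms by (intro power_decreasing) auto
  then show ?thesis using False by (simp add: power_mult)
next
  case True
  have "\<rho> ^ ((n + 1) * (n + 2) div 2) \<le> 1" using assms by (intro power_le_one) auto
  moreover have "0 \<le> (\<rho> ^ M) ^ n" using assms by simp
  ultimately show ?thesis using True by simp
qed

lemma norm_h_fun_le_cutoff:
  fixes w :: complex
  assumes w: "norm w < 1" and M: "M \<ge> 1"
  shows "norm (h_fun w) \<le> (2 * M + 1 / (1 - norm w ^ M)) / (1 - norm w)"
proof -
  define \<rho> where "\<rho> = norm w"
  have \<rho>: "0 \<le> \<rho>" "\<rho> < 1" using w by (auto simp: \<rho>_def)
  define t where "t n = (-1) ^ (n + 2) * w ^ ((n + 1) * (n + 2) div 2) / (1 - w ^ (n + 1))" for n
  define b where "b n = ((if n < 2 * M then 1 else 0) + (\<rho> ^ M) ^ n) / (1 - \<rho>)" for n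
  have t_le: "norm (t n) \<le> b n" for n
  proof -
    have den: "1 - \<rho> \<le> norm (1 - w ^ (n + 1))"
    proof -
      have "norm (w ^ (n + 1)) = \<rho> * \<rho> ^ n" by (simp add: \<rho>_def norm_power norm_mult)
      also have "\<dots> \<le> \<rho>" using \<rho> by (simp add: mult_left_le power_le_one)
      finally have "norm (w ^ (n + 1)) \<le> \<rho>" .
      then show ?thesis using norm_triangle_ineq2[of 1 "w ^ (n + 1)"] by simp
    qed
    have "norm (t n) = \<rho> ^ ((n + 1) * (n + 2) div 2) / norm (1 - w ^ (n + 1))"
      by (simp add: t_def norm_divide norm_mult norm_power \<rho>_def)
    also have "\<dots> \<le> \<rho> ^ ((n + 1) * (n + 2) div 2) / (1 - \<rho>)"
      using den \<rho> by (intro divide_left_mono mult_pos_pos) auto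
    also have "\<dots> \<le> b n"
      unfolding b_def using power_triangular_le[of \<rho> n M] \<rho> by (intro divide_right_mono) auto
    finally show ?thesis .
  qed
  have "(\<lambda>n. if n < 2 * M then 1 else 0) sums real (2 * M)"
    using sums_If_finite_set[of "{..<2 * M}" "\<lambda>_. 1 :: real"] by simp
  moreover have "(\<lambda>n. (\<rho> ^ M) ^ n) sums (1 / (1 - \<rho> ^ M))"
    using \<rho> M by (intro geometric_sums) (simp add: power_less_one_iff)
  ultimately have b_sums: "b sums ((2 * M + 1 / (1 - \<rho> ^ M)) / (1 - \<rho>))"
    unfolding b_def by (intro sums_divide sums_add) auto
  have summ: "summable (\<lambda>n. norm (t n))"
    by (rule summable_comparison_test[OF _ sums_summable[OF b_sums]]) (use t_le in auto)
  have "norm (h_fun w) \<le> (\<Sum>n. norm (t n))"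
    unfolding h_fun_def t_def[symmetric] by (rule summable_norm[OF summ])
  also have "\<dots> \<le> (\<Sum>n. b n)" by (rule suminf_le[OF t_le summ sums_summable[OF b_sums]])
  finally show ?thesis using b_sums by (simp add: sums_iff \<rho>_def)
qed

lemma norm_h_fun_le:
  fixes w :: complex
  assumes w: "norm w < 1"
  shows "norm (h_fun w) \<le> 6 * (1 / (1 - norm w)) powr (3/2)"
proof -
  define \<delta> where "\<delta> = 1 - norm w"
  define s where "s = sqrt \<delta>"
  have \<delta>_bounds: "0 < \<delta>" "\<delta> \<le> 1" using w by (auto simp: \<delta>_def)
  then have s: "0 < s" "s \<le> 1" "s * s = \<delta>" by (auto simp: s_def)
  \<comment> \<open>the cutoff \<open>M \<approx> \<delta>\<^sup>-\<^sup>1\<^sup>/\<^sup>2\<close> balances the two parts of the bound\<close>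
  define M where "M = nat \<lceil>1 / s\<rceil>"
  have "real M = of_int \<lceil>1 / s\<rceil>" using s(1) by (simp add: M_def)
  then have M_ge: "1 / s \<le> M" and M_le: "M \<le> 1 / s + 1"
    using le_of_int_ceiling of_int_ceiling_le_add_one by metis+
  have one_le: "1 \<le> 1 / s" using s by simp
  then have M1: "M \<ge> 1" using M_ge by linarith
  have "1 / (M * \<delta>) \<le> 1 / ((1 / s) * \<delta>)"
    using M_ge M1 s(1) \<delta>_bounds by (intro divide_left_mono mult_right_mono) auto
  also have "\<dots> = 1 / s" unfolding s(3)[symmetric] using s(1) by (simp add: field_simps)
  finally have "1 / (1 - norm w ^ M) \<le> 1 + 1 / s"
    using inverse_one_minus_power_le[of "norm w" M] w M1 by (simp add: \<delta>_def)
  then have "2 * real M + 1 / (1 - norm w ^ M) \<le> 6 / s" using M_le one_le by simp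
  then have "(2 * real M + 1 / (1 - norm w ^ M)) / \<delta> \<le> (6 / s) / \<delta>"
    using \<delta>_bounds by (intro divide_right_mono) auto
  then have "norm (h_fun w) \<le> (6 / s) / \<delta>"
    using norm_h_fun_le_cutoff[OF w M1] unfolding \<delta>_def by linarith
  also have "\<dots> = 6 * (1 / \<delta>) powr (3/2)"
    using s \<delta>_bounds by (simp add: powr_three_halves real_sqrt_divide s_def[symmetric] field_simps)
  finally show ?thesis by (simp add: \<delta>_def)
qed

definition nome :: "complex \<Rightarrow> complex" where
  "nome \<tau> = exp (2 * complex_of_real pi * \<i> * \<tau>)"

lemma nome_power: "nome \<tau> ^ j = exp (of_nat j * (2 * complex_of_real pi * \<i> * \<tau>))"
  by (simp add: nome_def exp_of_nat_mult)

lemma norm_nome_power: "norm (nome \<tau> ^ j) = exp (- (2 * pi * Im \<tau> * real j))"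
  by (simp add: nome_power)

lemma norm_nome: "norm (nome \<tau>) = exp (- (2 * pi * Im \<tau>))"
  using norm_nome_power[of \<tau> 1] by simp

lemma summable_lambert_term_nome: "0 < Im \<tau> \<Longrightarrow> summable (lambert_term (nome \<tau>))"
  by (intro norm_qpoch_inf_eq_exp(1)) (simp add: norm_nome)

lemma inverse_one_minus_norm_nome_le:
  assumes y: "0 < Im \<tau>" "Im \<tau> \<le> 1/2"
  shows "1 / (1 - norm (nome \<tau>)) \<le> (1 + pi) / (2 * pi * Im \<tau>)"
proof -
  define s where "s = 2 * pi * Im \<tau>"
  have s: "0 < s" "s \<le> pi" using y by (simp_all add: s_def)
  have "s / (1 + pi) \<le> s / (1 + s)" using s by (intro divide_left_mono) auto
  also have "\<dots> = 1 - 1 / (1 + s)" using s by (simp add: field_simps)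
  also have "\<dots> \<le> 1 - exp (- s)"
    using s exp_ge_add_one_self[of s] by (simp add: exp_minus divide_inverse le_imp_inverse_le)
  also have "\<dots> = 1 - norm (nome \<tau>)" by (simp add: norm_nome s_def)
  finally have "s / (1 + pi) \<le> 1 - norm (nome \<tau>)" .
  moreover have "norm (nome \<tau>) < 1" using y by (simp add: norm_nome)
  ultimately have "1 / (1 - norm (nome \<tau>)) \<le> 1 / (s / (1 + pi))"
    using s pi_gt_zero by (intro divide_left_mono mult_pos_pos) auto
  then show ?thesis by (simp add: s_def)
qed

lemma norm_h_fun_nome_power_le:
  assumes "m \<ge> 1" and y: "0 < Im \<tau>" "Im \<tau> \<le> 1/2"
  shows "norm (h_fun (nome \<tau> ^ m)) \<le> 6 * ((1 + pi) / (2 * pi * Im \<tau>)) powr (3/2)"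
proof -
  have q: "norm (nome \<tau>) < 1" using y by (simp add: norm_nome)
  then have qm: "norm (nome \<tau> ^ m) \<le> norm (nome \<tau>)"
    using assms by (simp add: norm_power power_le_one power_decreasing[of 1 m, simplified])
  have "1 / (1 - norm (nome \<tau> ^ m)) \<le> 1 / (1 - norm (nome \<tau>))"
    using q qm by (intro divide_left_mono mult_pos_pos) auto
  also have "\<dots> \<le> (1 + pi) / (2 * pi * Im \<tau>)" by (rule inverse_one_minus_norm_nome_le[OF y])
  finally have "(1 / (1 - norm (nome \<tau> ^ m))) powr (3/2) \<le> ((1 + pi) / (2 * pi * Im \<tau>)) powr (3/2)"
    using q qm by (intro powr_mono2) auto
  then show ?thesis
    using norm_h_fun_le[of "nome \<tau> ^ m"] norm_power_lt_one[OF q] assms by fastforce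
qed

section \<open>The Lambert series for the nome\<close>

lemma lambert_term_nome_le_inverse_square:
  assumes y: "0 < Im \<tau>" and j: "j \<ge> 1"
  shows "lambert_term (nome \<tau>) j \<le> 1 / (2 * pi * Im \<tau> * real j ^ 2)"
proof -
  define s where "s = 2 * pi * Im \<tau> * real j"
  have s0: "0 < s" using y j by (simp add: s_def)
  have "Re (nome \<tau> ^ j / (1 - nome \<tau> ^ j)) \<le> exp (- s) / (1 - exp (- s))"
    using Re_div_one_minus_le[of "nome \<tau> ^ j"] s0 by (simp add: norm_nome_power s_def)
  also have "\<dots> \<le> 1 / s"
    using s0 exp_ge_add_one_self[of s] by (simp add: exp_minus field_simps)
  finally have "lambert_term (nome \<tau>) j \<le> (1 / s) / real j"
    unfolding lambert_term_def using j by (intro divide_right_mono) auto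
  then show ?thesis by (simp add: s_def power2_eq_square)
qed

lemma lambert_term_nome_le_near_zero:
  assumes y: "0 < Im \<tau>" and j: "j \<ge> 1" and small: "2 * pi * real j * norm \<tau> \<le> 1/2"
  shows "lambert_term (nome \<tau>) j \<le> Im \<tau> / (2 * pi * norm \<tau> ^ 2 * real j ^ 2) + 6 * pi * norm \<tau>"
proof -
  define z where "z = of_nat j * (2 * complex_of_real pi * \<i> * \<tau>)"
  have norm_z: "norm z = 2 * pi * real j * norm \<tau>" by (simp add: z_def norm_mult)
  have "\<tau> \<noteq> 0" using y by auto
  then have z0: "z \<noteq> 0" using j by (simp add: z_def)
  \<comment> \<open>\<open>-1/z\<close> is the polar part of \<open>e\<^sup>z/(1 - e\<^sup>z)\<close>; its real part carries the factor \<open>Im \<tau> / |\<tau>|\<^sup>2\<close>\<close>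
  have "Re (1 / z) = Re z / norm z ^ 2" by (simp add: Re_divide cmod_power2)
  also have "\<dots> = - (2 * pi * real j * Im \<tau>) / (2 * pi * real j * norm \<tau>) ^ 2"
    unfolding norm_z by (simp add: z_def)
  also have "\<dots> = - (Im \<tau> / (2 * pi * real j * norm \<tau> ^ 2))"
    using j \<open>\<tau> \<noteq> 0\<close> by (simp add: power2_eq_square)
  finally have Re_inv: "Re (1 / z) = - (Im \<tau> / (2 * pi * real j * norm \<tau> ^ 2))" .
  have "Re (exp z / (1 - exp z)) = Re (exp z / (1 - exp z) + 1 / z + 1/2) - Re (1 / z) - 1/2"
    by simp
  also have "\<dots> \<le> 3 * norm z - Re (1 / z)"
    using complex_Re_le_cmod[of "exp z / (1 - exp z) + 1 / z + 1/2"]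
      norm_exp_div_one_minus_exp_plus_inverse_le[OF z0] small norm_z by linarith
  finally have "lambert_term (nome \<tau>) j
      \<le> (3 * (2 * pi * real j * norm \<tau>) + Im \<tau> / (2 * pi * real j * norm \<tau> ^ 2)) / real j"
    unfolding lambert_term_def nome_power z_def[symmetric] Re_inv norm_z using j
    by (intro divide_right_mono) auto
  also have "\<dots> = Im \<tau> / (2 * pi * norm \<tau> ^ 2 * real j ^ 2) + 6 * pi * norm \<tau>"
    using j by (simp add: add_divide_distrib power2_eq_square mult_ac)
  finally show ?thesis .
qed

lemma norm_one_minus_scaled_cis_ge:
  assumes e: "0 < e" "e \<le> 1" and \<theta>: "1/6 \<le> \<bar>\<theta>\<bar>" "\<bar>\<theta>\<bar> \<le> pi"
  shows "e * sin (1/6) \<le> norm (1 - complex_of_real e * cis \<theta>)"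
proof (cases "\<bar>\<theta>\<bar> \<le> pi/2")
  case True
  have "sin (1/6) \<le> sin \<bar>\<theta>\<bar>"
    using \<theta> True pi_gt3 by (intro sin_monotone_2pi_le) auto
  also have "\<dots> \<le> \<bar>sin \<theta>\<bar>" by (auto simp: abs_if)
  finally have "e * sin (1/6) \<le> \<bar>Im (1 - complex_of_real e * cis \<theta>)\<bar>"
    using e by (simp add: abs_mult mult_left_mono)
  also have "\<dots> \<le> norm (1 - complex_of_real e * cis \<theta>)" by (rule abs_Im_le_cmod)
  finally show ?thesis .
next
  case False
  have "cos \<bar>\<theta>\<bar> \<le> cos (pi/2)"
    using False \<theta> by (intro cos_monotone_0_pi_le) auto
  then have "1 \<le> Re (1 - complex_of_real e * cis \<theta>)" using e by (simp add: mult_nonneg_nonpos)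
  also have "\<dots> \<le> norm (1 - complex_of_real e * cis \<theta>)" by (rule complex_Re_le_cmod)
  moreover have "e * sin (1/6) \<le> 1"
    using e pi_gt3 by (intro mult_le_one sin_ge_zero) auto
  ultimately show ?thesis by linarith
qed

lemma lambert_term_nome_one_le:
  assumes y: "0 < Im \<tau>" "Im \<tau> \<le> \<bar>Re \<tau>\<bar>" and x: "\<bar>Re \<tau>\<bar> \<le> 1/2" and far: "1 / (8 * pi) < norm \<tau>"
  shows "lambert_term (nome \<tau>) 1 \<le> exp pi / sin (1/6)"
proof -
  define e where "e = exp (- (2 * pi * Im \<tau>))"
  define \<theta> where "\<theta> = 2 * pi * Re \<tau>"
  have q: "nome \<tau> = complex_of_real e * cis \<theta>"
    by (simp add: nome_def exp_eq_polar e_def \<theta>_def)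
  have e: "exp (- pi) \<le> e" "e \<le> 1" using y x by (simp_all add: e_def)
  have "(1 / (8 * pi)) ^ 2 < norm \<tau> ^ 2" using far by (intro power_strict_mono) auto
  also have "\<dots> \<le> 2 * Re \<tau> ^ 2"
    using y abs_le_square_iff[of "Im \<tau>" "Re \<tau>"] by (simp add: cmod_power2)
  finally have "(1/6) ^ 2 < \<bar>\<theta>\<bar> ^ 2"
    by (simp add: \<theta>_def power_mult_distrib power2_eq_square field_simps)
  then have \<theta>: "1/6 \<le> \<bar>\<theta>\<bar>" "\<bar>\<theta>\<bar> \<le> pi"
    using x by (auto simp: \<theta>_def abs_mult dest: power_less_imp_less_base)
  have s: "0 < sin (1/6 :: real)" using pi_gt3 by (intro sin_gt_zero) auto
  have "exp (- pi) * sin (1/6) \<le> e * sin (1/6)" using e s by (simp add: mult_right_mono)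
  also have "\<dots> \<le> norm (1 - nome \<tau>)"
    unfolding q using e \<theta> by (intro norm_one_minus_scaled_cis_ge) (auto simp: e_def)
  finally have den: "exp (- pi) * sin (1/6) \<le> norm (1 - nome \<tau>)" .
  have "lambert_term (nome \<tau>) 1 \<le> norm (nome \<tau>) / norm (1 - nome \<tau>)"
    unfolding lambert_term_def by (simp add: complex_Re_le_cmod flip: norm_divide)
  also have "\<dots> \<le> 1 / (exp (- pi) * sin (1/6))"
    using den s y by (intro frac_le) (auto simp: norm_nome)
  also have "\<dots> = exp pi / sin (1/6)" by (simp add: exp_minus field_simps)
  finally show ?thesis .
qed

lemma suminf_lambert_term_nome_le_first:
  assumes y: "0 < Im \<tau>" and first: "lambert_term (nome \<tau>) 1 \<le> c"
  shows "(\<Sum>j. lambert_term (nome \<tau>) j) \<le> pi / (12 * Im \<tau>) - 1 / (2 * pi * Im \<tau>) + c"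
proof -
  define b where
    "b j = (1 / real j ^ 2) / (2 * pi * Im \<tau>) + (if j = 1 then c - 1 / (2 * pi * Im \<tau>) else 0)" for j
  have b_sums: "b sums ((pi ^ 2 / 6) / (2 * pi * Im \<tau>) + (c - 1 / (2 * pi * Im \<tau>)))"
    unfolding b_def by (intro sums_add sums_divide inverse_squares_sums_nat sums_single)
  have "lambert_term (nome \<tau>) j \<le> b j" for j
    using first lambert_term_nome_le_inverse_square[OF y, of j]
    by (cases "j \<le> 1") (auto simp: b_def le_Suc_eq mult_ac)
  then have "(\<Sum>j. lambert_term (nome \<tau>) j) \<le> (\<Sum>j. b j)"
    by (intro suminf_le summable_lambert_term_nome y sums_summable[OF b_sums])
  also have "\<dots> = pi / (12 * Im \<tau>) - 1 / (2 * pi * Im \<tau>) + c"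
    using b_sums y by (simp add: sums_iff power2_eq_square)
  finally show ?thesis .
qed

lemma suminf_lambert_term_nome_le_far:
  assumes y: "0 < Im \<tau>" "Im \<tau> \<le> \<bar>Re \<tau>\<bar>" and x: "\<bar>Re \<tau>\<bar> \<le> 1/2" and far: "1 / (8 * pi) < norm \<tau>"
  shows "(\<Sum>j. lambert_term (nome \<tau>) j) \<le> pi / (24 * Im \<tau>) + exp pi / sin (1/6)"
proof -
  have "pi / (24 * Im \<tau>) \<le> 1 / (2 * pi * Im \<tau>)"
    using y pi_squared_le_10 by (simp add: field_simps power2_eq_square)
  then show ?thesis
    using suminf_lambert_term_nome_le_first[OF y(1) lambert_term_nome_one_le[OF y x far]] by simp
qed

lemma suminf_lambert_term_nome_le_steep:
  assumes y: "0 < Im \<tau>" and near: "norm \<tau> \<le> 1 / (8 * pi)" and steep: "3 * Im \<tau> < norm \<tau>"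
  shows "(\<Sum>j. lambert_term (nome \<tau>) j) \<le> pi / (24 * Im \<tau>) + 1"
proof -
  have "2 * pi * real 1 * norm \<tau> \<le> 1/2" using near by (simp add: field_simps)
  from lambert_term_nome_le_near_zero[OF y _ this]
  have "lambert_term (nome \<tau>) 1 \<le> Im \<tau> / (2 * pi * norm \<tau> ^ 2) + 6 * pi * norm \<tau>" by simp
  also have "\<dots> \<le> 1 / (18 * pi * Im \<tau>) + 1"
  proof -
    have "(3 * Im \<tau>) ^ 2 \<le> norm \<tau> ^ 2" using steep y by (intro power_mono) auto
    then have "Im \<tau> / (2 * pi * norm \<tau> ^ 2) \<le> Im \<tau> / (2 * pi * (3 * Im \<tau>) ^ 2)"
      using y by (intro divide_left_mono mult_left_mono mult_pos_pos) auto
    moreover have "6 * pi * norm \<tau> \<le> 1" using near by (simp add: field_simps)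
    ultimately show ?thesis using y by (simp add: power2_eq_square)
  qed
  finally have first: "lambert_term (nome \<tau>) 1 \<le> 1 / (18 * pi * Im \<tau>) + 1" .
  have "pi / (24 * Im \<tau>) + 1 / (18 * pi * Im \<tau>) = (3 * pi ^ 2 + 4) / (72 * pi * Im \<tau>)"
    using y by (simp add: field_simps power2_eq_square)
  also have "\<dots> \<le> 36 / (72 * pi * Im \<tau>)"
    using pi_squared_le_10 y by (intro divide_right_mono) auto
  finally have "pi / (24 * Im \<tau>) + 1 / (18 * pi * Im \<tau>) \<le> 1 / (2 * pi * Im \<tau>)" by simp
  then show ?thesis using suminf_lambert_term_nome_le_first[OF y first] by simp
qed

lemma suminf_lambert_term_nome_le_cutoff:
  assumes y: "0 < Im \<tau>" and K: "K \<ge> 1" and valid: "2 * pi * real K * norm \<tau> \<le> 1/2"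
  shows "(\<Sum>j. lambert_term (nome \<tau>) j)
    \<le> Im \<tau> / (2 * pi * norm \<tau> ^ 2) * (pi ^ 2 / 6) + real K * (6 * pi * norm \<tau>)
        + 1 / (2 * pi * Im \<tau> * real K)"
proof -
  define c where "c = Im \<tau> / (2 * pi * norm \<tau> ^ 2)"
  define tail :: "nat \<Rightarrow> real" where "tail = (\<lambda>j. if K < j then 1 / real j ^ 2 else 0)"
  have tail_sums: "tail sums suminf tail"
    unfolding tail_def by (intro summable_sums inverse_squares_tail_le(1)[OF K])
  define b where
    "b j = c * (1 / real j ^ 2) + (if j \<in> {1..K} then 6 * pi * norm \<tau> else 0) + tail j / (2 * pi * Im \<tau>)"
    for j
  have "(\<lambda>j. if j \<in> {1..K} then 6 * pi * norm \<tau> else 0) sums (\<Sum>j\<in>{1..K}. 6 * pi * norm \<tau>)"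
    by (rule sums_If_finite_set) simp
  then have b_sums: "b sums (c * (pi ^ 2 / 6) + real K * (6 * pi * norm \<tau>) + suminf tail / (2 * pi * Im \<tau>))"
    unfolding b_def by (intro sums_add sums_mult inverse_squares_sums_nat sums_divide tail_sums) auto
  have le: "lambert_term (nome \<tau>) j \<le> b j" for j
  proof -
    consider "j = 0" | "1 \<le> j" "j \<le> K" | "K < j" by linarith
    then show ?thesis
    proof cases
      case 2
      have "2 * pi * real j * norm \<tau> \<le> 2 * pi * real K * norm \<tau>"
        using 2 by (intro mult_right_mono mult_left_mono) auto
      then have "2 * pi * real j * norm \<tau> \<le> 1/2" using valid by linarith
      from lambert_term_nome_le_near_zero[OF y 2(1) this]
      have "lambert_term (nome \<tau>) j \<le> c * (1 / real j ^ 2) + 6 * pi * norm \<tau>"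
        by (simp add: c_def)
      then show ?thesis using 2 by (simp add: b_def tail_def)
    next
      case 3
      then have "lambert_term (nome \<tau>) j \<le> tail j / (2 * pi * Im \<tau>)"
        using lambert_term_nome_le_inverse_square[OF y, of j] K by (simp add: tail_def mult_ac)
      moreover have "0 \<le> c * (1 / real j ^ 2)" using y by (simp add: c_def)
      ultimately show ?thesis using 3 by (simp add: b_def)
    qed (simp add: b_def tail_def)
  qed
  have "(\<Sum>j. lambert_term (nome \<tau>) j) \<le> (\<Sum>j. b j)"
    by (intro suminf_le le summable_lambert_term_nome y sums_summable[OF b_sums])
  also have "\<dots> = c * (pi ^ 2 / 6) + real K * (6 * pi * norm \<tau>) + suminf tail / (2 * pi * Im \<tau>)"
    using b_sums by (simp add: sums_iff)
  also have "suminf tail / (2 * pi * Im \<tau>) \<le> (1 / real K) / (2 * pi * Im \<tau>)"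
    unfolding tail_def using inverse_squares_tail_le(2)[OF K] y by (intro divide_right_mono) auto
  finally show ?thesis by (simp add: c_def mult_ac)
qed

lemma suminf_lambert_term_nome_le_cusp:
  assumes y: "0 < Im \<tau>" "Im \<tau> \<le> \<bar>Re \<tau>\<bar>" and near: "norm \<tau> \<le> 1 / (8 * pi)"
    and cusp: "norm \<tau> \<le> 3 * Im \<tau>"
  shows "(\<Sum>j. lambert_term (nome \<tau>) j) \<le> pi / (24 * Im \<tau>) + 27/2"
proof -
  have t0: "0 < norm \<tau>" using y by auto
  define u where "u = 1 / (4 * pi * norm \<tau>)"
  have u2: "2 \<le> u" using near t0 by (simp add: u_def field_simps)
  define K where "K = nat \<lfloor>u\<rfloor>"
  have "real K = of_int \<lfloor>u\<rfloor>" using u2 by (simp add: K_def)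
  then have K_le: "real K \<le> u" and K_ge: "u / 2 \<le> real K"
    using u2 of_int_floor_le[of u] real_of_int_floor_gt_diff_one[of u] by linarith+
  then have K1: "K \<ge> 1" using u2 by linarith
  have "2 * pi * real K * norm \<tau> \<le> 2 * pi * u * norm \<tau>"
    using K_le t0 by (intro mult_right_mono mult_left_mono) auto
  also have "\<dots> = 1/2" using t0 by (simp add: u_def)
  finally have valid: "2 * pi * real K * norm \<tau> \<le> 1/2" .
  \<comment> \<open>\<open>|\<tau>|\<^sup>2 \<ge> 2 Im \<tau>\<^sup>2\<close> is where the hypothesis \<open>Im \<tau> \<le> |Re \<tau>|\<close> halves the main term\<close>
  have "2 * Im \<tau> ^ 2 \<le> norm \<tau> ^ 2"
    using y abs_le_square_iff[of "Im \<tau>" "Re \<tau>"] by (simp add: cmod_power2)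
  then have "Im \<tau> / (2 * pi * norm \<tau> ^ 2) \<le> Im \<tau> / (2 * pi * (2 * Im \<tau> ^ 2))"
    using y by (intro divide_left_mono mult_left_mono mult_pos_pos) auto
  also have "\<dots> = 1 / (4 * pi * Im \<tau>)" using y by (simp add: power2_eq_square)
  finally have "Im \<tau> / (2 * pi * norm \<tau> ^ 2) * (pi ^ 2 / 6) \<le> 1 / (4 * pi * Im \<tau>) * (pi ^ 2 / 6)"
    by (intro mult_right_mono) auto
  also have "\<dots> = pi / (24 * Im \<tau>)" by (simp add: power2_eq_square)
  finally have main: "Im \<tau> / (2 * pi * norm \<tau> ^ 2) * (pi ^ 2 / 6) \<le> pi / (24 * Im \<tau>)" .
  have "real K * (6 * pi * norm \<tau>) \<le> u * (6 * pi * norm \<tau>)"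
    using K_le t0 by (intro mult_right_mono) auto
  also have "\<dots> = 3/2" using t0 by (simp add: u_def)
  finally have head: "real K * (6 * pi * norm \<tau>) \<le> 3/2" .
  have "1 / real K \<le> 1 / (u / 2)" using K_ge u2 by (intro divide_left_mono) auto
  also have "\<dots> = 8 * pi * norm \<tau>" using t0 by (simp add: u_def)
  also have "\<dots> \<le> 12 * (2 * pi * Im \<tau>)" using cusp by simp
  finally have "(1 / real K) / (2 * pi * Im \<tau>) \<le> 12 * (2 * pi * Im \<tau>) / (2 * pi * Im \<tau>)"
    using y by (intro divide_right_mono) auto
  then have "1 / (2 * pi * Im \<tau> * real K) \<le> 12" using y by (simp add: mult_ac)
  then show ?thesis
    using suminf_lambert_term_nome_le_cutoff[OF y(1) K1 valid] main head by linarith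
qed

lemma suminf_lambert_term_nome_le:
  assumes y: "0 < Im \<tau>" "Im \<tau> \<le> \<bar>Re \<tau>\<bar>" and x: "\<bar>Re \<tau>\<bar> \<le> 1/2"
  shows "(\<Sum>j. lambert_term (nome \<tau>) j) \<le> pi / (24 * Im \<tau>) + (exp pi / sin (1/6) + 14)"
proof -
  have "0 < sin (1/6 :: real)" using pi_gt3 by (intro sin_gt_zero) auto
  then have "0 \<le> exp pi / sin (1/6)" by simp
  consider "1 / (8 * pi) < norm \<tau>" | "norm \<tau> \<le> 1 / (8 * pi)" "3 * Im \<tau> < norm \<tau>"
    | "norm \<tau> \<le> 1 / (8 * pi)" "norm \<tau> \<le> 3 * Im \<tau>" by linarith
  then show ?thesis
  proof cases
    case 1
    then show ?thesis using suminf_lambert_term_nome_le_far[OF y x] by simp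
  next
    case 2
    then show ?thesis using suminf_lambert_term_nome_le_steep[OF y(1)] \<open>0 \<le> exp pi / sin (1/6)\<close> by fastforce
  next
    case 3
    then show ?thesis using suminf_lambert_term_nome_le_cusp[OF y] \<open>0 \<le> exp pi / sin (1/6)\<close> by fastforce
  qed
qed

lemma norm_h_combination_div_qpoch_le:
  assumes m: "m \<ge> 1" and y: "0 < Im \<tau>" "Im \<tau> \<le> \<bar>Re \<tau>\<bar>" and x: "\<bar>Re \<tau>\<bar> \<le> 1/2"
  shows "norm ((h_fun (nome \<tau>) - of_nat m * h_fun (nome \<tau> ^ m)) / qpoch_inf (nome \<tau>))
    \<le> 6 * (1 + real m) * ((1 + pi) / (2 * pi * Im \<tau>)) powr (3/2)
        * exp (pi / (24 * Im \<tau>) + (exp pi / sin (1/6) + 14))"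
proof -
  define B where "B = 6 * ((1 + pi) / (2 * pi * Im \<tau>)) powr (3/2)"
  have y2: "Im \<tau> \<le> 1/2" using y x by linarith
  have "norm (h_fun (nome \<tau>) - of_nat m * h_fun (nome \<tau> ^ m))
      \<le> norm (h_fun (nome \<tau>)) + real m * norm (h_fun (nome \<tau> ^ m))"
    using norm_triangle_ineq4[of "h_fun (nome \<tau>)" "of_nat m * h_fun (nome \<tau> ^ m)"]
    by (simp add: norm_mult)
  also have "\<dots> \<le> B + real m * B"
    unfolding B_def using norm_h_fun_nome_power_le[of 1, OF _ y(1) y2] norm_h_fun_nome_power_le[OF m y(1) y2]
    by (intro add_mono mult_left_mono) auto
  finally have num: "norm (h_fun (nome \<tau>) - of_nat m * h_fun (nome \<tau> ^ m)) \<le> (1 + real m) * B"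
    by (simp add: algebra_simps)
  have "norm (qpoch_inf (nome \<tau>)) = exp (- (\<Sum>j. lambert_term (nome \<tau>) j))"
    using y by (intro norm_qpoch_inf_eq_exp(2)) (simp add: norm_nome)
  then have "norm ((h_fun (nome \<tau>) - of_nat m * h_fun (nome \<tau> ^ m)) / qpoch_inf (nome \<tau>))
      = norm (h_fun (nome \<tau>) - of_nat m * h_fun (nome \<tau> ^ m)) / exp (- (\<Sum>j. lambert_term (nome \<tau>) j))"
    by (simp only: norm_divide)
  also have "\<dots> = norm (h_fun (nome \<tau>) - of_nat m * h_fun (nome \<tau> ^ m)) * exp (\<Sum>j. lambert_term (nome \<tau>) j)"
    by (simp add: exp_minus divide_inverse)
  also have "\<dots> \<le> ((1 + real m) * B) * exp (pi / (24 * Im \<tau>) + (exp pi / sin (1/6) + 14))"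
    using num suminf_lambert_term_nome_le[OF y x] by (intro mult_mono) (auto simp: B_def)
  finally show ?thesis by (simp add: B_def algebra_simps)
qed

lemma norm_h_combination_div_qpoch_le_explicit:
  fixes N x :: real
  assumes m: "m \<ge> 1" and N: "N > 0" and x: "1 / (2 * sqrt (6 * N)) \<le> \<bar>x\<bar>" "\<bar>x\<bar> \<le> 1/2"
  defines "q \<equiv> nome (Complex x (1 / (2 * sqrt (6 * N))))"
  shows "norm ((h_fun q - of_nat m * h_fun (q ^ m)) / qpoch_inf q)
    \<le> 6 * (1 + real m) * ((1 + pi) * sqrt 6 / pi) powr (3/2) * exp (exp pi / sin (1/6) + 14)
        * N powr (3/4) * exp (pi / 2 * sqrt (N / 6))"
proof -
  define k where "k = (1 + pi) * sqrt 6 / pi"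
  define y where "y = 1 / (2 * sqrt (6 * N))"
  have "(1 + pi) / (2 * pi * y) = k * N powr (1/2)"
    using N by (simp add: y_def k_def real_sqrt_mult powr_half_sqrt field_simps)
  moreover have "0 \<le> k" by (simp add: k_def)
  ultimately have D: "((1 + pi) / (2 * pi * y)) powr (3/2) = k powr (3/2) * N powr (3/4)"
    by (simp add: powr_mult powr_powr)
  have E: "pi / (24 * y) = pi / 2 * sqrt (N / 6)"
    using N by (simp add: y_def real_sqrt_mult real_sqrt_divide field_simps)
  have "0 < y" using N by (simp add: y_def)
  then have "norm ((h_fun q - of_nat m * h_fun (q ^ m)) / qpoch_inf q)
      \<le> 6 * (1 + real m) * ((1 + pi) / (2 * pi * y)) powr (3/2)
          * exp (pi / (24 * y) + (exp pi / sin (1/6) + 14))"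
    using norm_h_combination_div_qpoch_le[of m "Complex x y"] m x unfolding q_def y_def by simp
  then show ?thesis unfolding D E k_def[symmetric] by (simp add: exp_add mult_ac)
qed

theorem proposition2p8:
  fixes m :: nat
  assumes "m \<ge> 2"
  shows "\<exists>C. \<forall>(N::real) (x::real). N > 0 \<longrightarrow>
           1 / (2 * sqrt (6 * N)) \<le> \<bar>x\<bar> \<longrightarrow> \<bar>x\<bar> \<le> 1 / 2 \<longrightarrow>
           (let y = 1 / (2 * sqrt (6 * N));
                q = exp (2 * complex_of_real pi * \<i> * Complex x y)
            in norm ((h_fun q - of_nat m * h_fun (q ^ m)) / qpoch_inf q)
                 \<le> C * N powr (3/4) * exp (pi / 2 * sqrt (N / 6)))"
  unfolding Let_def nome_def[symmetric]
  by (intro exI allI impI, rule norm_h_combination_div_qpoch_le_explicit) (use assms in auto)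

end
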